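(* Let \[0 \to A \xrightarrow{f} B \xrightarrow{g} C \to 0\] be a sequence of Hausdorff topological abelian groups and continuous homomorphisms which is exact as a sequence of abelian groups. Suppose that $f$ is a closed map and that for every compact subset $K \subseteq C$ there is a compact subset $B' \subseteq B$ with $g(B') \supseteq K$. Then the induced sequence of condensed abelian groups \[0 \to \underline{A} \to \underline{B} \to \underline{C} \to 0\] is exact.
   Context: An extremally disconnected set is a projective object in the category of compact Hausdorff spaces. A condensed set (resp. condensed abelian group) is a functor $T$ from the opposite of the category of extremally disconnected sets to sets (resp. abelian groups) with $T(\emptyset)=*$, $T(S_1\sqcup S_2)=T(S_1)\times T(S_2)$, and which is the left Kan extension of its restriction to $\kappa$-small extremally disconnected sets for some uncountable strong limit cardinal $\kappa$. For a T1 topological space (resp. topological abelian group) $X$, its condensation $\underline{X}$ is the condensed set (resp. condensed abelian group) $S \mapsto C(S,X)$, the continuous maps from $S$ to $X$. In condensed abelian groups, kernels and cokernels are computed sectionwise, so a sequence is exact iff it is exact after evaluation at every extremally disconnected $S$. *)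

theory Defs
  imports "HOL-Analysis.Analysis"
begin

text \<open>An extremally disconnected set: a compact Hausdorff space in which the closure
  of every open set is open (equivalently, a projective object of CHaus).\<close>
definition extremally_disconnected :: "'d topology \<Rightarrow> bool" where
  "extremally_disconnected S \<longleftrightarrow> compact_space S \<and> Hausdorff_space S \<and>
     (\<forall>U. openin S U \<longrightarrow> openin S (S closure_of U))"

text \<open>Sections of the condensation of a topological abelian group X at S:
  the abelian group C(S,X) of continuous maps, represented by functions
  that are 0 outside the underlying set of S.\<close>
definition cond_sections :: "'d topology \<Rightarrow> ('d \<Rightarrow> 'x::{topological_space, zero}) set" where
  "cond_sections S = {\<phi>. continuous_map S euclidean \<phi> \<and> (\<forall>s. s \<notin> topspace S \<longrightarrow> \<phi> s = 0)}"

definition cond_map :: "('x \<Rightarrow> 'y) \<Rightarrow> ('d \<Rightarrow> 'x) \<Rightarrow> ('d \<Rightarrow> 'y)" where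
  "cond_map f \<phi> = f \<circ> \<phi>"

definition short_exact :: "'a set \<Rightarrow> 'b set \<Rightarrow> 'c set \<Rightarrow> ('a \<Rightarrow> 'b) \<Rightarrow> ('b \<Rightarrow> 'c) \<Rightarrow> 'c \<Rightarrow> bool" where
  "short_exact X Y Z p q z \<longleftrightarrow> p ` X \<subseteq> Y \<and> q ` Y \<subseteq> Z \<and> inj_on p X \<and>
     p ` X = {y \<in> Y. q y = z} \<and> q ` Y = Z"

end

theory Submission
  imports Defs
begin

(* Sectionwise, exactness at the first two places is formal: since a continuous closed injection
   has a continuous inverse on its image, composing with f identifies C(S,A) with the maps
   S -> B landing in f(A) = ker g.  Surjectivity of C(S,B) -> C(S,C) is where extremal
   disconnectedness enters.  Given gamma : S -> C, the compact set gamma(S) lies in g(K) for a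
   compact K in B, and the fibre product P = {(s,b) in S x K. gamma s = g b} is compact Hausdorff
   and surjects onto S.  By Gleason's argument this surjection has a continuous section: a closed
   F in P that is minimal among those surjecting onto S maps injectively, because distinct points
   a, b of F with the same image have disjoint neighbourhoods U, V, the open sets
   S - pi(F - U) and S - pi(F - V) are then disjoint, yet by minimality the closures of both
   contain pi a, which extremal disconnectedness forbids.  So pi is a homeomorphism from F onto S,
   and composing its inverse with the projection to K lifts gamma. *)

lemma Hausdorff_space_euclidean_t2: "Hausdorff_space (euclidean :: 'a::t2_space topology)"
  unfolding Hausdorff_space_def disjnt_def by (metis open_openin separation_t2)

lemma image_Inter_closedin_chain:
  assumes P: "compact_space P" and S: "t1_space S" and \<pi>: "continuous_map P S \<pi>"
    and ne: "\<F> \<noteq> {}" and ch: "subset.chain UNIV \<F>"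
    and surj: "\<And>F. F \<in> \<F> \<Longrightarrow> closedin P F \<and> \<pi> ` F = topspace S"
  shows "\<pi> ` \<Inter>\<F> = topspace S"
proof
  show "\<pi> ` \<Inter>\<F> \<subseteq> topspace S"
    using ne surj by blast
  show "topspace S \<subseteq> \<pi> ` \<Inter>\<F>"
  proof
    fix s assume s: "s \<in> topspace S"
    define fibre where "fibre F = F \<inter> {x \<in> topspace P. \<pi> x \<in> {s}}" for F
    have fibre_closed: "closedin P (fibre F)" if "F \<in> \<F>" for F
      unfolding fibre_def using surj[OF that] closedin_t1_singleton[OF S s]
      by (blast intro: closedin_continuous_map_preimage[OF \<pi>])
    have fibre_fip: "\<Inter>(fibre ` \<G>) \<noteq> {}" if fin: "finite \<G>" and sub: "\<G> \<subseteq> \<F>" for \<G>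
    proof (cases "\<G> = {}")
      case False
      then have "\<Inter>\<G> \<in> \<G>"
        using fin sub ch by (intro Inter_in_chain) (auto simp: subset_chain_def)
      then obtain x where x: "x \<in> \<Inter>\<G>" "\<pi> x = s"
        using surj s sub by (metis imageE subsetD)
      moreover have "x \<in> topspace P"
        using x \<open>\<Inter>\<G> \<in> \<G>\<close> sub surj closedin_subset by blast
      ultimately show ?thesis
        by (auto simp: fibre_def)
    qed (use s surj ne in \<open>auto simp: fibre_def\<close>)
    have "\<Inter>(fibre ` \<F>) \<noteq> {}"
    proof (rule P[unfolded compact_space_fip, rule_format], intro conjI ballI allI impI)
      show "closedin P C" if "C \<in> fibre ` \<F>" for C
        using that fibre_closed by blast
      fix \<C> assume "finite \<C> \<and> \<C> \<subseteq> fibre ` \<F>"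
      then obtain \<G> where "\<G> \<subseteq> \<F>" "finite \<G>" "\<C> = fibre ` \<G>"
        by (meson finite_subset_image)
      then show "\<Inter>\<C> \<noteq> {}"
        using fibre_fip by blast
    qed
    then show "s \<in> \<pi> ` \<Inter>\<F>"
      using ne by (auto simp: fibre_def)
  qed
qed

lemma compact_space_minimal_surjective_closedin:
  assumes P: "compact_space P" and S: "t1_space S" and \<pi>: "continuous_map P S \<pi>"
    and surj: "\<pi> ` topspace P = topspace S"
  obtains F where "closedin P F" "\<pi> ` F = topspace S"
    "\<And>F'. \<lbrakk>closedin P F'; F' \<subseteq> F; \<pi> ` F' = topspace S\<rbrakk> \<Longrightarrow> F' = F"
proof -
  define \<A> where "\<A> = {U. openin P U \<and> \<pi> ` (topspace P - U) = topspace S}"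
  have chain_Union: "\<Union>\<C> \<in> \<A>" if ch: "subset.chain \<A> \<C>" for \<C>
  proof (cases "\<C> = {}")
    case False
    have \<C>\<A>: "\<C> \<subseteq> \<A>"
      using ch by (simp add: subset_chain_def)
    have "\<pi> ` \<Inter>((-) (topspace P) ` \<C>) = topspace S"
    proof (rule image_Inter_closedin_chain[OF P S \<pi>])
      show "subset.chain UNIV ((-) (topspace P) ` \<C>)"
        using ch by (simp add: subset_chain_def) (meson Diff_mono subset_refl)
      show "closedin P F \<and> \<pi> ` F = topspace S" if F: "F \<in> (-) (topspace P) ` \<C>" for F
      proof -
        obtain U where "U \<in> \<A>" "F = topspace P - U"
          using F \<C>\<A> by blast
        then show ?thesis
          by (simp add: \<A>_def closedin_diff)
      qed
    qed (use False in simp)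
    moreover have "\<Inter>((-) (topspace P) ` \<C>) = topspace P - \<Union>\<C>"
      using False by blast
    moreover have "openin P (\<Union>\<C>)"
      using \<C>\<A> by (auto simp: \<A>_def)
    ultimately show ?thesis
      by (simp add: \<A>_def)
  qed (use surj in \<open>simp add: \<A>_def\<close>)
  obtain M where M: "M \<in> \<A>" and max: "\<And>U. \<lbrakk>U \<in> \<A>; M \<subseteq> U\<rbrakk> \<Longrightarrow> U = M"
    using subset_Zorn'[OF chain_Union] by blast
  show thesis
  proof
    show "closedin P (topspace P - M)" "\<pi> ` (topspace P - M) = topspace S"
      using M by (auto simp: \<A>_def)
    fix F' assume F': "closedin P F'" "F' \<subseteq> topspace P - M" "\<pi> ` F' = topspace S"
    then have "topspace P - F' \<in> \<A>"
      using closedin_subset[OF F'(1)] by (simp add: \<A>_def openin_diff Diff_Diff_Int Int_absorb1)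
    moreover have "M \<subseteq> topspace P - F'"
      using F'(2) M by (auto simp: \<A>_def dest: openin_subset)
    ultimately have "topspace P - F' = M"
      using max by blast
    then show "F' = topspace P - M"
      using F'(1) closedin_subset by blast
  qed
qed

lemma minimal_surjective_closedin_in_closure_of:
  assumes \<pi>: "continuous_map P S \<pi>" and F: "closedin P F" "\<pi> ` F = topspace S"
    and minimal: "\<And>F'. \<lbrakk>closedin P F'; F' \<subseteq> F; \<pi> ` F' = topspace S\<rbrakk> \<Longrightarrow> F' = F"
    and U: "openin P U" "u \<in> U" "u \<in> F"
  shows "\<pi> u \<in> S closure_of (topspace S - \<pi> ` (F - U))"
  unfolding in_closure_of
proof (intro conjI allI impI)
  show "\<pi> u \<in> topspace S"
    using F(2) U(3) by blast
  fix T assume T: "\<pi> u \<in> T \<and> openin S T"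
  define W where "W = U \<inter> {x \<in> topspace P. \<pi> x \<in> T}"
  have "openin P W"
    unfolding W_def using U(1) T openin_continuous_map_preimage[OF \<pi>] by blast
  moreover have "F - W \<noteq> F"
    using U T closedin_subset[OF F(1)] by (auto simp: W_def)
  ultimately have "\<pi> ` (F - W) \<noteq> topspace S"
    using minimal[of "F - W"] F(1) by (auto simp: closedin_diff)
  then obtain t where t: "t \<in> topspace S" "t \<notin> \<pi> ` (F - W)"
    using F(2) by blast
  then obtain y where y: "y \<in> F" "\<pi> y = t"
    using F(2) by (metis imageE)
  then have "y \<in> W"
    using t by auto
  then show "\<exists>t. t \<in> topspace S - \<pi> ` (F - U) \<and> t \<in> T"
    using t y by (auto simp: W_def)
qed

lemma extremally_disconnected_minimal_surjective_inj_on: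
  assumes ed: "extremally_disconnected S" and P: "compact_space P" "Hausdorff_space P"
    and \<pi>: "continuous_map P S \<pi>" and F: "closedin P F" "\<pi> ` F = topspace S"
    and minimal: "\<And>F'. \<lbrakk>closedin P F'; F' \<subseteq> F; \<pi> ` F' = topspace S\<rbrakk> \<Longrightarrow> F' = F"
  shows "inj_on \<pi> F"
proof (rule inj_onI, rule ccontr)
  fix a b assume ab: "a \<in> F" "b \<in> F" "\<pi> a = \<pi> b" "a \<noteq> b"
  have S: "Hausdorff_space S" "\<And>U. openin S U \<Longrightarrow> openin S (S closure_of U)"
    using ed by (auto simp: extremally_disconnected_def)
  \<comment> \<open>the points of S whose whole fibre in F lies in U\<close>
  define small where "small U = topspace S - \<pi> ` (F - U)" for U
  have small_open: "openin S (small U)" if "openin P U" for U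
  proof -
    have "compactin P (F - U)"
      using P(1) F(1) that by (simp add: closedin_compact_space closedin_diff)
    then have "closedin S (\<pi> ` (F - U))"
      using \<pi> S(1) by (simp add: image_compactin compactin_imp_closedin)
    then show ?thesis
      by (simp add: small_def openin_diff)
  qed
  have "\<exists>U V. openin P U \<and> openin P V \<and> a \<in> U \<and> b \<in> V \<and> disjnt U V"
    using P(2) ab closedin_subset[OF F(1)] unfolding Hausdorff_space_def by blast
  then obtain U V where UV: "openin P U" "openin P V" "a \<in> U" "b \<in> V" "disjnt U V"
    by blast
  have disj: "small U \<inter> small V = {}"
  proof -
    have "t \<notin> small V" if "t \<in> small U" for t
    proof -
      have "t \<in> \<pi> ` F"
        using that F(2) by (simp add: small_def)
      then obtain y where "y \<in> F" "\<pi> y = t"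
        by blast
      then show ?thesis
        using that UV(5) by (auto simp: small_def disjnt_def)
    qed
    then show ?thesis
      by blast
  qed
  have "S closure_of small U \<inter> small V = {}"
    using openin_Int_closure_of_eq_empty[OF small_open[OF UV(2)], of "small U"] disj
    by (simp add: Int_commute)
  then have "S closure_of small U \<inter> S closure_of small V = {}"
    using openin_Int_closure_of_eq_empty[OF S(2)[OF small_open[OF UV(1)]], of "small V"]
    by simp
  moreover have "\<pi> a \<in> S closure_of small U"
    unfolding small_def by (rule minimal_surjective_closedin_in_closure_of[OF \<pi> F minimal UV(1,3) ab(1)])
  moreover have "\<pi> a \<in> S closure_of small V"
    unfolding small_def ab(3) by (rule minimal_surjective_closedin_in_closure_of[OF \<pi> F minimal UV(2,4) ab(2)])
  ultimately show False
    by blast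
qed

lemma extremally_disconnected_section:
  assumes ed: "extremally_disconnected S" and P: "compact_space P" "Hausdorff_space P"
    and \<pi>: "continuous_map P S \<pi>" and surj: "\<pi> ` topspace P = topspace S"
  obtains \<sigma> where "continuous_map S P \<sigma>" "\<And>s. s \<in> topspace S \<Longrightarrow> \<pi> (\<sigma> s) = s"
proof -
  have S: "Hausdorff_space S"
    using ed by (simp add: extremally_disconnected_def)
  obtain F where F: "closedin P F" "\<pi> ` F = topspace S"
    and minimal: "\<And>F'. \<lbrakk>closedin P F'; F' \<subseteq> F; \<pi> ` F' = topspace S\<rbrakk> \<Longrightarrow> F' = F"
    using compact_space_minimal_surjective_closedin[OF P(1) Hausdorff_imp_t1_space[OF S] \<pi> surj]
    by blast
  define Q where "Q = subtopology P F"
  have Q: "topspace Q = F" "compact_space Q" "continuous_map Q S \<pi>"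
    unfolding Q_def
    by (rule topspace_subtopology_subset[OF closedin_subset[OF F(1)]],
        rule compact_space_subtopology[OF closedin_compact_space[OF P(1) F(1)]],
        rule continuous_map_from_subtopology[OF \<pi>])
  have "homeomorphic_map Q S \<pi>"
  proof (rule bijective_closed_imp_homeomorphic_map[OF Q(3)])
    show "closed_map Q S \<pi>"
      by (rule continuous_imp_closed_map[OF Q(3,2) S])
    show "\<pi> ` topspace Q = topspace S"
      unfolding Q(1) by (rule F(2))
    show "inj_on \<pi> (topspace Q)"
      unfolding Q(1) by (rule extremally_disconnected_minimal_surjective_inj_on[OF ed P \<pi> F minimal])
  qed
  then obtain \<sigma> where \<sigma>: "continuous_map S Q \<sigma>" "\<And>s. s \<in> topspace S \<Longrightarrow> \<pi> (\<sigma> s) = s"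
    unfolding homeomorphic_map_maps homeomorphic_maps_def by blast
  show thesis
    using that continuous_map_into_fulltopology[OF \<sigma>(1)[unfolded Q_def]] \<sigma>(2) by blast
qed

lemma extremally_disconnected_lift_compactin:
  assumes ed: "extremally_disconnected S" and X: "Hausdorff_space X" and Y: "Hausdorff_space Y"
    and g: "continuous_map X Y g" and K: "compactin X K"
    and \<gamma>: "continuous_map S Y \<gamma>" and lift: "\<gamma> ` topspace S \<subseteq> g ` K"
  obtains \<psi> where "continuous_map S X \<psi>" "\<And>s. s \<in> topspace S \<Longrightarrow> g (\<psi> s) = \<gamma> s"
proof -
  have S: "compact_space S" "Hausdorff_space S"
    using ed by (simp_all add: extremally_disconnected_def)
  define SX where "SX = prod_topology S X"
  define T where "T = {z \<in> topspace SX. \<gamma> (fst z) = g (snd z)} \<inter> topspace S \<times> K"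
  define P where "P = subtopology SX T"
  have "closedin SX {z \<in> topspace SX. (\<gamma> \<circ> fst) z = (g \<circ> snd) z}"
    unfolding SX_def
    by (intro closedin_continuous_maps_eq[OF Y] continuous_map_compose[OF continuous_map_fst \<gamma>]
        continuous_map_compose[OF continuous_map_snd g])
  moreover have "compactin SX (topspace S \<times> K)"
    using S(1) K by (simp add: SX_def compactin_Times compact_space_def)
  ultimately have "compactin SX T"
    unfolding T_def by (simp add: closed_Int_compactin)
  then have P: "compact_space P" "topspace P = T"
    unfolding P_def by (simp_all add: compact_space_subtopology compactin_subset_topspace Int_absorb1)
  have "Hausdorff_space P"
    unfolding P_def SX_def
    by (intro Hausdorff_space_subtopology) (simp add: Hausdorff_space_prod_topology S(2) X)
  moreover have "continuous_map P S fst"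
    unfolding P_def SX_def by (rule continuous_map_from_subtopology[OF continuous_map_fst])
  moreover have "fst ` topspace P = topspace S"
  proof
    show "fst ` topspace P \<subseteq> topspace S"
      by (auto simp: P(2) T_def)
    show "topspace S \<subseteq> fst ` topspace P"
    proof
      fix s assume s: "s \<in> topspace S"
      then obtain x where "x \<in> K" "\<gamma> s = g x"
        using lift by blast
      moreover have "x \<in> topspace X"
        using K \<open>x \<in> K\<close> compactin_subset_topspace by blast
      ultimately have "(s, x) \<in> topspace P"
        using s by (simp add: P(2) T_def SX_def)
      then show "s \<in> fst ` topspace P"
        by force
    qed
  qed
  ultimately obtain \<sigma> where \<sigma>: "continuous_map S P \<sigma>" "\<And>s. s \<in> topspace S \<Longrightarrow> fst (\<sigma> s) = s"
    using extremally_disconnected_section[OF ed P(1)] by blast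
  show thesis
  proof
    show "continuous_map S X (snd \<circ> \<sigma>)"
      using continuous_map_into_fulltopology[OF \<sigma>(1)[unfolded P_def]]
      unfolding SX_def by (rule continuous_map_compose[OF _ continuous_map_snd])
    show "g ((snd \<circ> \<sigma>) s) = \<gamma> s" if "s \<in> topspace S" for s
    proof -
      have "\<sigma> s \<in> T"
        using \<sigma>(1) that P(2) by (auto simp: continuous_map_def)
      then show ?thesis
        using \<sigma>(2)[OF that] by (simp add: T_def)
    qed
  qed
qed

lemma cond_map_in_cond_sections:
  assumes h: "continuous_on UNIV h" "h 0 = 0" and \<phi>: "\<phi> \<in> cond_sections S"
  shows "cond_map h \<phi> \<in> cond_sections S"
proof -
  have "continuous_map S euclidean \<phi>"
    using \<phi> by (simp add: cond_sections_def)
  moreover have "continuous_map euclidean euclidean h"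
    using h(1) by simp
  ultimately have "continuous_map S euclidean (h \<circ> \<phi>)"
    by (rule continuous_map_compose)
  then show ?thesis
    using \<phi> h(2) by (simp add: cond_sections_def cond_map_def)
qed

lemma inj_on_cond_map:
  assumes "inj h"
  shows "inj_on (cond_map h) A"
proof (rule inj_onI, rule ext)
  fix \<phi> \<phi>' s assume "cond_map h \<phi> = cond_map h \<phi>'"
  then have "h (\<phi> s) = h (\<phi>' s)"
    unfolding cond_map_def by (metis comp_apply)
  then show "\<phi> s = \<phi>' s"
    by (rule injD[OF assms])
qed

lemma cond_map_image_closed_embedding:
  fixes f :: "'a::{topological_space, zero} \<Rightarrow> 'b::{topological_space, zero}"
    and S :: "'d topology"
  assumes f: "continuous_on UNIV f" "f 0 = 0" "inj f" "closed_map euclidean euclidean f"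
  shows "cond_map f ` cond_sections S = {\<psi> \<in> cond_sections S. range \<psi> \<subseteq> range f}"
proof
  show "cond_map f ` cond_sections S \<subseteq> {\<psi> \<in> cond_sections S. range \<psi> \<subseteq> range f}"
    using cond_map_in_cond_sections[OF f(1,2)] by (auto simp: cond_map_def)
  show "{\<psi> \<in> cond_sections S. range \<psi> \<subseteq> range f} \<subseteq> cond_map f ` cond_sections S"
  proof clarify
    fix \<psi> :: "'d \<Rightarrow> 'b" assume \<psi>: "\<psi> \<in> cond_sections S" "range \<psi> \<subseteq> range f"
    define \<phi> where "\<phi> = inv f \<circ> \<psi>"
    have f\<phi>: "cond_map f \<phi> = \<psi>"
      by (simp add: cond_map_def \<phi>_def fun_eq_iff f_inv_into_f[OF subsetD[OF \<psi>(2) rangeI]])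
    have "closedin S {s \<in> topspace S. \<phi> s \<in> C}" if "closedin euclidean C" for C
    proof -
      have "\<psi> s = f (\<phi> s)" for s
        using f\<phi> by (simp add: cond_map_def fun_eq_iff)
      then have "{s \<in> topspace S. \<phi> s \<in> C} = {s \<in> topspace S. \<psi> s \<in> f ` C}"
        by (simp add: inj_image_mem_iff[OF f(3)])
      moreover have "continuous_map S euclidean \<psi>"
        using \<psi>(1) by (simp add: cond_sections_def)
      moreover have "closedin euclidean (f ` C)"
        using f(4) that unfolding closed_map_def by blast
      ultimately show ?thesis
        by (simp add: closedin_continuous_map_preimage)
    qed
    then have "continuous_map S euclidean \<phi>"
      by (simp add: continuous_map_closedin)
    moreover have "\<phi> s = 0" if "s \<notin> topspace S" for s
    proof -
      have "inv f 0 = 0"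
        using inv_f_f[OF f(3), of 0] f(2) by simp
      then show ?thesis
        using \<psi>(1) that by (simp add: cond_sections_def \<phi>_def)
    qed
    ultimately have "\<phi> \<in> cond_sections S"
      by (simp add: cond_sections_def)
    then show "\<psi> \<in> cond_map f ` cond_sections S"
      using f\<phi> by blast
  qed
qed

lemma cond_map_image_extremally_disconnected:
  fixes g :: "'b::{t2_space, zero} \<Rightarrow> 'c::{t2_space, zero}"
  assumes ed: "extremally_disconnected S" and g: "continuous_on UNIV g" "g 0 = 0"
    and compact_lift: "\<And>K. compact K \<Longrightarrow> \<exists>B'. compact B' \<and> K \<subseteq> g ` B'"
  shows "cond_map g ` cond_sections S = (cond_sections S :: ('d \<Rightarrow> 'c) set)"
proof
  show "cond_map g ` cond_sections S \<subseteq> cond_sections S"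
    using cond_map_in_cond_sections[OF g] by blast
  show "cond_sections S \<subseteq> cond_map g ` (cond_sections S :: ('d \<Rightarrow> 'b) set)"
  proof
    fix \<gamma> :: "'d \<Rightarrow> 'c" assume \<gamma>: "\<gamma> \<in> cond_sections S"
    then have "compact (\<gamma> ` topspace S)"
      using ed by (auto simp: cond_sections_def extremally_disconnected_def compact_space_def
          dest: image_compactin)
    then obtain B' where B': "compact B'" "\<gamma> ` topspace S \<subseteq> g ` B'"
      using compact_lift by blast
    obtain \<psi> where \<psi>: "continuous_map S euclidean \<psi>" "\<And>s. s \<in> topspace S \<Longrightarrow> g (\<psi> s) = \<gamma> s"
      using extremally_disconnected_lift_compactin[OF ed Hausdorff_space_euclidean_t2
          Hausdorff_space_euclidean_t2 _ _ _ B'(2)] g(1) B'(1) \<gamma>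
      by (auto simp: cond_sections_def)
    define \<psi>' where "\<psi>' s = (if s \<in> topspace S then \<psi> s else 0)" for s
    have "\<psi>' \<in> cond_sections S"
      using \<psi>(1) by (auto simp: cond_sections_def \<psi>'_def intro: continuous_map_eq)
    moreover have "cond_map g \<psi>' = \<gamma>"
      using \<gamma> \<psi>(2) g(2) by (auto simp: cond_map_def \<psi>'_def cond_sections_def fun_eq_iff)
    ultimately show "\<gamma> \<in> cond_map g ` cond_sections S"
      by blast
  qed
qed

theorem mainTheorem1:
  fixes f :: "'a::{topological_ab_group_add, t2_space} \<Rightarrow> 'b::{topological_ab_group_add, t2_space}"
    and g :: "'b \<Rightarrow> 'c::{topological_ab_group_add, t2_space}"
  assumes f_hom: "\<And>x y. f (x + y) = f x + f y"
    and g_hom: "\<And>x y. g (x + y) = g x + g y"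
    and f_cont: "continuous_on UNIV f"
    and g_cont: "continuous_on UNIV g"
    and f_inj: "inj f"
    and exact_mid: "range f = {b. g b = 0}"
    and g_surj: "surj g"
    and f_closed: "closed_map euclidean euclidean f"
    and compact_lift: "\<And>K. compact K \<Longrightarrow> \<exists>B'. compact B' \<and> K \<subseteq> g ` B'"
  shows "\<forall>S :: 'd topology. extremally_disconnected S \<longrightarrow>
           short_exact (cond_sections S :: ('d \<Rightarrow> 'a) set) (cond_sections S) (cond_sections S)
             (cond_map f) (cond_map g) (\<lambda>_. 0)"
proof (intro allI impI)
  fix S :: "'d topology" assume ed: "extremally_disconnected S"
  have f0: "f 0 = 0" and g0: "g 0 = 0"
    using f_hom[of 0 0] g_hom[of 0 0] by simp_all
  have kernel: "{\<psi> \<in> cond_sections S. cond_map g \<psi> = (\<lambda>_. 0)} =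
      {\<psi> \<in> cond_sections S. range \<psi> \<subseteq> range f}"
    using exact_mid by (auto simp: cond_map_def fun_eq_iff)
  show "short_exact (cond_sections S :: ('d \<Rightarrow> 'a) set) (cond_sections S) (cond_sections S)
      (cond_map f) (cond_map g) (\<lambda>_. 0)"
    unfolding short_exact_def kernel
  proof (intro conjI)
    show "cond_map f ` cond_sections S \<subseteq> cond_sections S"
      using cond_map_in_cond_sections[OF f_cont f0] by blast
    show "cond_map g ` cond_sections S \<subseteq> cond_sections S"
      using cond_map_in_cond_sections[OF g_cont g0] by blast
  qed (simp_all add: inj_on_cond_map[OF f_inj] cond_map_image_closed_embedding[OF f_cont f0 f_inj f_closed]
      cond_map_image_extremally_disconnected[OF ed g_cont g0 compact_lift])
qed

end
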